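(* Let $\Gamma$ be the first Grigorchuk group with generators $a,b,c,d$, acting on the right on $\{0,1\}^{\mathbb N}$, and let $\rho=111\cdots$. For a word $w=w_1\cdots w_n$ over $\{a,b,c,d\}$ set $\delta(w)=\#\{\rho\, w_{i+1}\cdots w_n: i=0,\dots,n\}$. Call $w$ pre-reduced if it contains no two consecutive letters from $\{b,c,d\}$, and let the pre-reduction of $w$ be the word obtained from $w$ by repeatedly deleting subwords $bb,cc,dd$ and replacing subwords $bc$ or $cb$ by $d$, $cd$ or $dc$ by $b$, and $db$ or $bd$ by $c$, until it is pre-reduced. Then $\delta(w)=\delta(\text{pre-reduction of } w)$.
   Context: The first Grigorchuk group $\Gamma$ is the group of permutations of the set $\{0,1\}^{\mathbb N}$ of infinite binary sequences (acting on the right) generated by $a,b,c,d$, defined recursively for $x\in\{0,1\}$ and infinite sequences $u$ by: $(xu)a=(1-x)u$; $(0u)b=0(ua)$, $(1u)b=1(uc)$; $(0u)c=0(ua)$, $(1u)c=1(ud)$; $(0u)d=0u$, $(1u)d=1(ub)$. *)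

theory Defs
  imports Main
begin

text \<open>Binary sequences in {0,1}^N are represented as nat => bool (True = 1, False = 0).\<close>

datatype gen = A | B | C | D

type_synonym seq = "nat \<Rightarrow> bool"

definition stail :: "seq \<Rightarrow> seq" where
  "stail s = (\<lambda>i. s (Suc i))"

text \<open>Bit n of the image (s)g of a sequence s under a generator g, following the
recursive definition: (xu)a = (1-x)u; (0u)b = 0(ua), (1u)b = 1(uc);
(0u)c = 0(ua), (1u)c = 1(ud); (0u)d = 0u, (1u)d = 1(ub).\<close>
fun act :: "gen \<Rightarrow> seq \<Rightarrow> seq" where
  "act A s 0 = (\<not> s 0)"
| "act A s (Suc n) = s (Suc n)"
| "act B s 0 = s 0"
| "act B s (Suc n) = (if s 0 then act C (stail s) n else act A (stail s) n)"
| "act C s 0 = s 0"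
| "act C s (Suc n) = (if s 0 then act D (stail s) n else act A (stail s) n)"
| "act D s 0 = s 0"
| "act D s (Suc n) = (if s 0 then act B (stail s) n else s (Suc n))"

text \<open>Right action of a word w1...wn: s w1 ... wn (w1 applied first).\<close>
definition act_word :: "seq \<Rightarrow> gen list \<Rightarrow> seq" where
  "act_word s w = fold act w s"

definition rho :: seq where
  "rho = (\<lambda>_. True)"

definition delta :: "gen list \<Rightarrow> nat" where
  "delta w = card ((\<lambda>i. act_word rho (drop i w)) ` {0..length w})"

definition pre_reduced :: "gen list \<Rightarrow> bool" where
  "pre_reduced w \<longleftrightarrow> (\<forall>u x y v. w = u @ [x, y] @ v \<longrightarrow> x = A \<or> y = A)"

inductive pre_step :: "gen list \<Rightarrow> gen list \<Rightarrow> bool" where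
  del_bb: "pre_step (u @ [B, B] @ v) (u @ v)"
| del_cc: "pre_step (u @ [C, C] @ v) (u @ v)"
| del_dd: "pre_step (u @ [D, D] @ v) (u @ v)"
| rep_bc: "pre_step (u @ [B, C] @ v) (u @ [D] @ v)"
| rep_cb: "pre_step (u @ [C, B] @ v) (u @ [D] @ v)"
| rep_cd: "pre_step (u @ [C, D] @ v) (u @ [B] @ v)"
| rep_dc: "pre_step (u @ [D, C] @ v) (u @ [B] @ v)"
| rep_db: "pre_step (u @ [D, B] @ v) (u @ [C] @ v)"
| rep_bd: "pre_step (u @ [B, D] @ v) (u @ [C] @ v)"

definition pre_reduction :: "gen list \<Rightarrow> gen list \<Rightarrow> bool" where
  "pre_reduction w w' \<longleftrightarrow> pre_step\<^sup>*\<^sup>* w w' \<and> pre_reduced w'"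

end

theory Submission
  imports Defs
begin

text \<open>
  The elements \<open>1, b, c, d\<close> form a Klein four-group and \<open>b, c, d\<close> fix \<open>\<rho>\<close>. Hence a
  pre-reduction step, which replaces a factor \<open>xy\<close> with \<open>x, y \<in> {b, c, d}\<close> by a word
  representing the same group element, does not change the points \<open>\<rho> s\<close> for the suffixes
  \<open>s\<close> starting before the factor, while every suffix starting inside the factor (before or
  after the step) gives the point \<open>\<rho> v\<close> of the suffix \<open>v\<close> following it.
\<close>

fun bcd_mult :: "gen \<Rightarrow> gen \<Rightarrow> gen" where
  "bcd_mult B C = D" | "bcd_mult C B = D"
| "bcd_mult C D = B" | "bcd_mult D C = B"
| "bcd_mult B D = C" | "bcd_mult D B = C"
| "bcd_mult _ _ = A"

definition bcd_contract :: "gen \<Rightarrow> gen \<Rightarrow> gen list" where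
  "bcd_contract X Y = (if X = Y then [] else [bcd_mult X Y])"

lemma act_A_A: "act A (act A s) = s"
  by (rule ext, case_tac x) auto

lemma act_bcd_fst: "X \<noteq> A \<Longrightarrow> act X s 0 = s 0"
  by (cases X) auto

lemma stail_act_B: "stail (act B s) = (if s 0 then act C (stail s) else act A (stail s))"
  by (rule ext) (simp add: stail_def)

lemma stail_act_C: "stail (act C s) = (if s 0 then act D (stail s) else act A (stail s))"
  by (rule ext) (simp add: stail_def)

lemma stail_act_D: "stail (act D s) = (if s 0 then act B (stail s) else stail s)"
  by (rule ext) (simp add: stail_def)

lemma act_bcd_act_bcd_nth:
  assumes "X \<noteq> A" "Y \<noteq> A"
  shows "act Y (act X s) n = (if X = Y then s n else act (bcd_mult X Y) s n)"
  using assms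
proof (induction n arbitrary: s X Y)
  case 0
  then show ?case by (cases X; cases Y) auto
next
  case (Suc n)
  show ?case using Suc.prems
    by (cases X; cases Y)
      (simp_all add: stail_act_B stail_act_C stail_act_D act_bcd_fst act_A_A Suc.IH,
       auto simp: stail_def)
qed

lemma act_bcd_act_bcd:
  "X \<noteq> A \<Longrightarrow> Y \<noteq> A \<Longrightarrow> act Y (act X s) = fold act (bcd_contract X Y) s"
  using act_bcd_act_bcd_nth[of X Y s] by (auto simp: bcd_contract_def)

lemma act_bcd_rho: "X \<noteq> A \<Longrightarrow> act X rho = rho"
proof
  fix n
  show "X \<noteq> A \<Longrightarrow> act X rho n = rho n"
  proof (induction n arbitrary: X)
    case 0
    then show ?case by (cases X) auto
  next
    case (Suc n)
    have "stail rho = rho" by (simp add: stail_def rho_def)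
    with Suc show ?case by (cases X) (simp_all, auto simp: rho_def)
  qed
qed

definition suffix_orbit :: "gen list \<Rightarrow> seq set" where
  "suffix_orbit w = (\<lambda>i. act_word rho (drop i w)) ` {0..length w}"

lemma act_word_Cons: "act_word s (x # w) = act_word (act x s) w"
  by (simp add: act_word_def)

lemma suffix_orbit_Cons: "suffix_orbit (x # w) = insert (act_word rho (x # w)) (suffix_orbit w)"
proof -
  have "{0..length (x # w)} = insert 0 (Suc ` {0..length w})"
    by (auto simp: image_iff)
  then show ?thesis
    unfolding suffix_orbit_def by (simp only: image_insert image_image drop_Suc_Cons drop_0)
qed

lemma act_word_rho_in_suffix_orbit: "act_word rho w \<in> suffix_orbit w"
  unfolding suffix_orbit_def by (rule image_eqI[where x = 0]) auto

lemma suffix_orbit_Cons_bcd: "X \<noteq> A \<Longrightarrow> suffix_orbit (X # v) = suffix_orbit v"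
  using act_word_rho_in_suffix_orbit[of v]
  by (simp add: suffix_orbit_Cons act_word_Cons act_bcd_rho insert_absorb)

lemma suffix_orbit_append_cong:
  assumes "\<And>s. act_word s (l1 @ v) = act_word s (l2 @ v)"
    and "suffix_orbit (l1 @ v) = suffix_orbit (l2 @ v)"
  shows "suffix_orbit (u @ l1 @ v) = suffix_orbit (u @ l2 @ v)"
proof (induction u)
  case Nil
  then show ?case using assms(2) by simp
next
  case (Cons x u)
  have "act_word rho (x # u @ l1 @ v) = act_word rho (x # u @ l2 @ v)"
    using assms(1) by (simp add: act_word_Cons act_word_def)
  then show ?case using Cons by (simp add: suffix_orbit_Cons)
qed

lemma suffix_orbit_bcd_contract:
  assumes "X \<noteq> A" "Y \<noteq> A"
  shows "suffix_orbit (u @ X # Y # v) = suffix_orbit (u @ bcd_contract X Y @ v)"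
proof -
  have "bcd_contract X Y = [] \<or> (\<exists>Z. Z \<noteq> A \<and> bcd_contract X Y = [Z])"
    using assms by (cases X; cases Y) (auto simp: bcd_contract_def)
  then have "suffix_orbit (bcd_contract X Y @ v) = suffix_orbit v"
    using suffix_orbit_Cons_bcd by auto
  moreover have "act_word s ([X, Y] @ v) = act_word s (bcd_contract X Y @ v)" for s
    using assms by (simp add: act_word_def act_bcd_act_bcd)
  ultimately show ?thesis
    using suffix_orbit_append_cong[of "[X, Y]" v "bcd_contract X Y" u] assms
    by (simp add: suffix_orbit_Cons_bcd)
qed

lemma pre_step_suffix_orbit: "pre_step w w' \<Longrightarrow> suffix_orbit w = suffix_orbit w'"
  by (induction rule: pre_step.induct) (simp_all add: suffix_orbit_bcd_contract bcd_contract_def)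

theorem lemma4p1:
  assumes "pre_reduction w w'"
  shows "delta w = delta w'"
proof -
  have "pre_step\<^sup>*\<^sup>* w w'" using assms by (simp add: pre_reduction_def)
  then have "suffix_orbit w = suffix_orbit w'"
    by (induction rule: rtranclp_induct) (auto dest: pre_step_suffix_orbit)
  then show ?thesis by (simp add: delta_def suffix_orbit_def)
qed

end
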